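(* Let $R$ be an $n^2\times n^2$ solution of the QYBE satisfying the Hecke condition $(PR-q)(PR+q^{-1})=0$, and regard $\Omega_q(R)$ as a superalgebra with $x_i$ even and $\mathrm dx_i$ odd. Let $\alpha,\beta,\gamma,\delta$ satisfy the relations of $GL_q^\Omega(1|1)$ and form, in the graded tensor product of $GL_q^\Omega(1|1)$ with $\Omega_q(R)$ (odd elements from different factors anticommuting, all other pairs commuting), $x_i'=\alpha x_i+\beta\,\mathrm dx_i$, $\mathrm dx_i'=\gamma x_i+\delta\,\mathrm dx_i$ for $i=1,\dots,n$. Then the $x_i',\mathrm dx_i'$ satisfy the same relations as the generators of $\Omega_q(R)$.
   Context: $P$ is the permutation matrix; repeated indices summed. $\Omega_q(R)$ is generated by $x_1,\dots,x_n,\mathrm dx_1,\dots,\mathrm dx_n$ with relations $x_ix_j=q^{-1}x_bx_aR^a{}_i{}^b{}_j$, $\mathrm dx_i\,x_j=q\,x_b\,\mathrm dx_aR^a{}_i{}^b{}_j$, $\mathrm dx_i\,\mathrm dx_j=-q\,\mathrm dx_b\,\mathrm dx_aR^a{}_i{}^b{}_j$. $GL_q^\Omega(1|1)$ is the super-Hopf algebra generated by $\alpha,\delta$ even and invertible and $\beta,\gamma$ odd with relations $\beta\alpha=\alpha\beta$, $\gamma\alpha=q^2\alpha\gamma$, $\delta\beta=\beta\delta$, $\delta\gamma=q^{-2}\gamma\delta$, $\gamma\beta=-q^2\beta\gamma$, $\delta\alpha-\alpha\delta=(1-q^2)\beta\gamma$, $\beta^2=\gamma^2=0$, with matrix super-coproduct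 on $\begin{pmatrix}\alpha&\beta\\\gamma&\delta\end{pmatrix}$. *)

theory Defs
  imports Main
begin

definition mmul :: "('i::finite \<Rightarrow> 'i \<Rightarrow> 'k::comm_ring_1) \<Rightarrow> ('i \<Rightarrow> 'i \<Rightarrow> 'k) \<Rightarrow> 'i \<Rightarrow> 'i \<Rightarrow> 'k" where
  "mmul M N x z = (\<Sum>y\<in>UNIV. M x y * N y z)"

definition idm :: "'i \<Rightarrow> 'i \<Rightarrow> 'k::comm_ring_1" where
  "idm x y = (if x = y then 1 else 0)"

text \<open>An R-matrix is given by its components R a i b j = R^a_i^b_j; as an n^2 x n^2
  matrix its entry in row (a,b) and column (i,j) is R^a_i^b_j.\<close>

definition Rmat :: "('n \<Rightarrow> 'n \<Rightarrow> 'n \<Rightarrow> 'n \<Rightarrow> 'k) \<Rightarrow> ('n \<times> 'n) \<Rightarrow> ('n \<times> 'n) \<Rightarrow> 'k" where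
  "Rmat R = (\<lambda>(a, b) (i, j). R a i b j)"

definition Pmat :: "('n \<times> 'n) \<Rightarrow> ('n \<times> 'n) \<Rightarrow> 'k::comm_ring_1" where
  "Pmat = (\<lambda>(a, b) (i, j). if a = j \<and> b = i then 1 else 0)"

definition R12 :: "('n \<Rightarrow> 'n \<Rightarrow> 'n \<Rightarrow> 'n \<Rightarrow> 'k::comm_ring_1) \<Rightarrow> ('n \<times> 'n \<times> 'n) \<Rightarrow> ('n \<times> 'n \<times> 'n) \<Rightarrow> 'k" where
  "R12 R = (\<lambda>(a, b, c) (i, j, k). R a i b j * idm c k)"

definition R13 :: "('n \<Rightarrow> 'n \<Rightarrow> 'n \<Rightarrow> 'n \<Rightarrow> 'k::comm_ring_1) \<Rightarrow> ('n \<times> 'n \<times> 'n) \<Rightarrow> ('n \<times> 'n \<times> 'n) \<Rightarrow> 'k" where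
  "R13 R = (\<lambda>(a, b, c) (i, j, k). R a i c k * idm b j)"

definition R23 :: "('n \<Rightarrow> 'n \<Rightarrow> 'n \<Rightarrow> 'n \<Rightarrow> 'k::comm_ring_1) \<Rightarrow> ('n \<times> 'n \<times> 'n) \<Rightarrow> ('n \<times> 'n \<times> 'n) \<Rightarrow> 'k" where
  "R23 R = (\<lambda>(a, b, c) (i, j, k). idm a i * R b j c k)"

definition QYBE :: "('n::finite \<Rightarrow> 'n \<Rightarrow> 'n \<Rightarrow> 'n \<Rightarrow> 'k::comm_ring_1) \<Rightarrow> bool" where
  "QYBE R \<longleftrightarrow> mmul (mmul (R12 R) (R13 R)) (R23 R) = mmul (mmul (R23 R) (R13 R)) (R12 R)"

definition hecke :: "'k::field \<Rightarrow> ('n::finite \<Rightarrow> 'n \<Rightarrow> 'n \<Rightarrow> 'n \<Rightarrow> 'k) \<Rightarrow> bool" where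
  "hecke q R \<longleftrightarrow>
     mmul (\<lambda>x y. mmul Pmat (Rmat R) x y - q * idm x y)
          (\<lambda>x y. mmul Pmat (Rmat R) x y + inverse q * idm x y) = (\<lambda>x y. 0)"

text \<open>A scalar embedding: a unital ring homomorphism from the ground field into the
  centre of the algebra 'S (i.e. 'S is an associative unital 'k-algebra).\<close>
definition central_scalars :: "('k::field \<Rightarrow> 'S::ring_1) \<Rightarrow> bool" where
  "central_scalars emb \<longleftrightarrow>
     (\<forall>a b. emb (a + b) = emb a + emb b) \<and> (\<forall>a b. emb (a * b) = emb a * emb b) \<and>
     emb 1 = 1 \<and> (\<forall>c s. emb c * s = s * emb c)"

definition omega_rels :: "('k::field \<Rightarrow> 'S::ring_1) \<Rightarrow> 'k \<Rightarrow> ('n::finite \<Rightarrow> 'n \<Rightarrow> 'n \<Rightarrow> 'n \<Rightarrow> 'k)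
      \<Rightarrow> ('n \<Rightarrow> 'S) \<Rightarrow> ('n \<Rightarrow> 'S) \<Rightarrow> bool" where
  "omega_rels emb q R x dx \<longleftrightarrow>
     (\<forall>i j. x i * x j = (\<Sum>a\<in>UNIV. \<Sum>b\<in>UNIV. emb (inverse q * R a i b j) * (x b * x a))) \<and>
     (\<forall>i j. dx i * x j = (\<Sum>a\<in>UNIV. \<Sum>b\<in>UNIV. emb (q * R a i b j) * (x b * dx a))) \<and>
     (\<forall>i j. dx i * dx j = (\<Sum>a\<in>UNIV. \<Sum>b\<in>UNIV. emb (- q * R a i b j) * (dx b * dx a)))"

definition gl11_rels :: "('k::field \<Rightarrow> 'S::ring_1) \<Rightarrow> 'k \<Rightarrow> 'S \<Rightarrow> 'S \<Rightarrow> 'S \<Rightarrow> 'S \<Rightarrow> bool" where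
  "gl11_rels emb q \<alpha> \<beta> \<gamma> \<delta> \<longleftrightarrow>
     (\<exists>\<alpha>'. \<alpha> * \<alpha>' = 1 \<and> \<alpha>' * \<alpha> = 1) \<and> (\<exists>\<delta>'. \<delta> * \<delta>' = 1 \<and> \<delta>' * \<delta> = 1) \<and>
     \<beta> * \<alpha> = \<alpha> * \<beta> \<and> \<gamma> * \<alpha> = emb (q ^ 2) * (\<alpha> * \<gamma>) \<and>
     \<delta> * \<beta> = \<beta> * \<delta> \<and> \<delta> * \<gamma> = emb (inverse (q ^ 2)) * (\<gamma> * \<delta>) \<and>
     \<gamma> * \<beta> = - (emb (q ^ 2) * (\<beta> * \<gamma>)) \<and>
     \<delta> * \<alpha> - \<alpha> * \<delta> = emb (1 - q ^ 2) * (\<beta> * \<gamma>) \<and>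
     \<beta> * \<beta> = 0 \<and> \<gamma> * \<gamma> = 0"

text \<open>Commutation rules of the graded tensor product GL_q^Omega(1|1) \<otimes> Omega_q(R):
  alpha, delta, x i even; beta, gamma, dx i odd; odd elements from different factors
  anticommute, all other pairs from different factors commute.\<close>
definition graded_cross_rels :: "'S::ring_1 \<Rightarrow> 'S \<Rightarrow> 'S \<Rightarrow> 'S \<Rightarrow> ('n \<Rightarrow> 'S) \<Rightarrow> ('n \<Rightarrow> 'S) \<Rightarrow> bool" where
  "graded_cross_rels \<alpha> \<beta> \<gamma> \<delta> x dx \<longleftrightarrow>
     (\<forall>i. \<alpha> * x i = x i * \<alpha> \<and> \<alpha> * dx i = dx i * \<alpha> \<and>
          \<delta> * x i = x i * \<delta> \<and> \<delta> * dx i = dx i * \<delta> \<and>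
          \<beta> * x i = x i * \<beta> \<and> \<gamma> * x i = x i * \<gamma> \<and>
          \<beta> * dx i = - (dx i * \<beta>) \<and> \<gamma> * dx i = - (dx i * \<gamma>))"

end

theory Submission
  imports Defs
begin

(*
  Write S for the operator T |-> (R^a_i^b_j T_ba)_ij on n x n matrices over the algebra (braid_op
  below); it is PR acting on T, so the Hecke condition says S^2 = (q - q^-1) S + 1. The relations
  of Omega_q(R) state S(x x) = q x x, S(x dx) = q^-1 dx x and S(dx dx) = -q^-1 dx dx, and the Hecke
  condition then forces S(dx x) = (q - q^-1) dx x + q x dx. The graded cross relations move the
  GL_q(1|1) coefficients of a product of primed generators to the left, writing it as a combination
  of x x, x dx, dx x, dx dx on which S acts term by term; comparing coefficients reduces each relation
  to the defining relations of GL_q(1|1).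
*)

lemma sum_swap_pairs:
  fixes f :: "'n::finite \<Rightarrow> 'n \<Rightarrow> 'n \<Rightarrow> 'n \<Rightarrow> 'a::comm_monoid_add"
  shows "(\<Sum>a\<in>UNIV. \<Sum>b\<in>UNIV. \<Sum>c\<in>UNIV. \<Sum>d\<in>UNIV. f a b c d)
       = (\<Sum>c\<in>UNIV. \<Sum>d\<in>UNIV. \<Sum>a\<in>UNIV. \<Sum>b\<in>UNIV. f a b c d)"
proof -
  have "(\<Sum>a\<in>UNIV. \<Sum>b\<in>UNIV. \<Sum>c\<in>UNIV. \<Sum>d\<in>UNIV. f a b c d)
      = (\<Sum>a\<in>UNIV. \<Sum>c\<in>UNIV. \<Sum>b\<in>UNIV. \<Sum>d\<in>UNIV. f a b c d)"
    by (intro sum.cong refl sum.swap)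
  also have "\<dots> = (\<Sum>c\<in>UNIV. \<Sum>a\<in>UNIV. \<Sum>d\<in>UNIV. \<Sum>b\<in>UNIV. f a b c d)"
    by (subst sum.swap) (intro sum.cong refl sum.swap)
  also have "\<dots> = (\<Sum>c\<in>UNIV. \<Sum>d\<in>UNIV. \<Sum>a\<in>UNIV. \<Sum>b\<in>UNIV. f a b c d)"
    by (intro sum.cong refl sum.swap)
  finally show ?thesis .
qed

lemma mmul_Pmat_Rmat: "mmul Pmat (Rmat R) (a, b) (i, j) = R b i a j"
proof -
  have "mmul Pmat (Rmat R) (a, b) (i, j) = (\<Sum>w\<in>UNIV. if w = (b, a) then R b i a j else 0)"
    unfolding mmul_def by (rule sum.cong) (auto simp: Pmat_def Rmat_def split: if_splits)
  then show ?thesis by simp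
qed

lemma sum_mult_idm: "(\<Sum>y\<in>(UNIV::'i::finite set). f y * idm y z) = (f z :: 'k::comm_ring_1)"
proof -
  have "(\<Sum>y\<in>UNIV. f y * idm y z) = (\<Sum>y\<in>UNIV. if y = z then f z else 0)"
    by (rule sum.cong) (auto simp: idm_def)
  then show ?thesis by simp
qed

lemma sum_idm_mult: "(\<Sum>y\<in>(UNIV::'i::finite set). idm x y * f y) = (f x :: 'k::comm_ring_1)"
proof -
  have "(\<Sum>y\<in>UNIV. idm x y * f y) = (\<Sum>y\<in>UNIV. if y = x then f x else 0)"
    by (rule sum.cong) (auto simp: idm_def)
  then show ?thesis by simp
qed

lemma hecke_components:
  fixes R :: "'n::finite \<Rightarrow> 'n \<Rightarrow> 'n \<Rightarrow> 'n \<Rightarrow> 'k::field"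
  assumes "hecke q R" and "q \<noteq> 0"
  shows "(\<Sum>c\<in>UNIV. \<Sum>d\<in>UNIV. R b c a d * R d i c j)
       = (q - inverse q) * R b i a j + (if a = i \<and> b = j then 1 else 0)"
proof -
  let ?M = "mmul Pmat (Rmat R) :: 'n \<times> 'n \<Rightarrow> _"
  have "mmul (\<lambda>x y. ?M x y - q * idm x y) (\<lambda>x y. ?M x y + inverse q * idm x y) (a, b) (i, j) = 0"
    using assms(1) unfolding hecke_def by simp
  moreover have "(?M (a, b) y - q * idm (a, b) y) * (?M y (i, j) + inverse q * idm y (i, j))
     = ?M (a, b) y * ?M y (i, j) + inverse q * (?M (a, b) y * idm y (i, j))
       - q * (idm (a, b) y * ?M y (i, j)) - q * inverse q * (idm (a, b) y * idm y (i, j))" for y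
    by (simp add: algebra_simps)
  ultimately have "(\<Sum>y\<in>UNIV. ?M (a, b) y * ?M y (i, j)) + inverse q * ?M (a, b) (i, j)
      - q * ?M (a, b) (i, j) - q * inverse q * idm (a, b) (i, j) = 0"
    unfolding mmul_def
    by (simp only: sum.distrib sum_subtractf flip: sum_distrib_left) (simp only: sum_mult_idm sum_idm_mult)
  moreover have "(\<Sum>y\<in>UNIV. ?M (a, b) y * ?M y (i, j)) = (\<Sum>c\<in>UNIV. \<Sum>d\<in>UNIV. R b c a d * R d i c j)"
    by (simp add: sum.cartesian_product flip: UNIV_Times_UNIV del: UNIV_Times_UNIV)
      (rule sum.cong, auto simp: mmul_Pmat_Rmat)
  ultimately show ?thesis
    using assms(2) by (simp add: mmul_Pmat_Rmat idm_def algebra_simps split: if_splits)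
qed

definition braid_op :: "('k \<Rightarrow> 'S::ring_1) \<Rightarrow> ('n::finite \<Rightarrow> 'n \<Rightarrow> 'n \<Rightarrow> 'n \<Rightarrow> 'k)
      \<Rightarrow> ('n \<Rightarrow> 'n \<Rightarrow> 'S) \<Rightarrow> 'n \<Rightarrow> 'n \<Rightarrow> 'S" where
  "braid_op emb R T i j = (\<Sum>a\<in>UNIV. \<Sum>b\<in>UNIV. emb (R a i b j) * T b a)"

locale scalar_embedding =
  fixes emb :: "'k::field \<Rightarrow> 'S::ring_1"
  assumes central_scalars: "central_scalars emb"
begin

lemma emb_add: "emb (a + b) = emb a + emb b"
  using central_scalars unfolding central_scalars_def by blast

lemma emb_mult: "emb (a * b) = emb a * emb b"
  using central_scalars unfolding central_scalars_def by blast

lemma emb_one [simp]: "emb 1 = 1"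
  using central_scalars unfolding central_scalars_def by blast

lemma emb_commute: "emb c * s = s * emb c"
  using central_scalars unfolding central_scalars_def by blast

lemma emb_zero [simp]: "emb 0 = 0"
  using emb_add[of 0 0] by simp

lemma emb_uminus: "emb (- a) = - emb a"
  using emb_add[of a "- a"] by (simp add: add_eq_0_iff2)

lemma emb_diff: "emb (a - b) = emb a - emb b"
  using emb_add[of a "- b"] by (simp add: emb_uminus)

lemma emb_sum: "emb (sum f A) = (\<Sum>x\<in>A. emb (f x))"
  by (induction A rule: infinite_finite_induct) (auto simp: emb_add)

lemma mult_emb_left_commute: "s * (emb c * t) = emb c * (s * t)"
  by (metis emb_commute mult.assoc)

lemma emb_mult_emb: "emb a * (emb b * t) = emb (a * b) * t"
  by (simp add: emb_mult mult.assoc)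

lemma emb_mult_add: "emb a * t + emb b * t = emb (a + b) * t"
  by (simp add: emb_add distrib_right)

lemma braid_op_add:
  "braid_op emb R (\<lambda>u v. S u v + T u v) i j = braid_op emb R S i j + braid_op emb R T i j"
  unfolding braid_op_def by (simp add: distrib_left sum.distrib)

lemma braid_op_mult_left: "braid_op emb R (\<lambda>u v. c * T u v) i j = c * braid_op emb R T i j"
  unfolding braid_op_def by (simp add: sum_distrib_left mult_emb_left_commute)

lemma braid_op_quadratic:
  assumes "hecke q R" and "q \<noteq> 0"
  shows "braid_op emb R (braid_op emb R T) i j = emb (q - inverse q) * braid_op emb R T i j + T i j"
proof -
  have "braid_op emb R (braid_op emb R T) i j
      = (\<Sum>a\<in>UNIV. \<Sum>b\<in>UNIV. \<Sum>c\<in>UNIV. \<Sum>d\<in>UNIV. emb (R c b d a * R a i b j) * T d c)"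
    unfolding braid_op_def by (simp add: sum_distrib_left emb_mult_emb mult.commute)
  also have "\<dots> = (\<Sum>c\<in>UNIV. \<Sum>d\<in>UNIV. \<Sum>a\<in>UNIV. \<Sum>b\<in>UNIV. emb (R c b d a * R a i b j) * T d c)"
    by (rule sum_swap_pairs)
  also have "\<dots> = (\<Sum>c\<in>UNIV. \<Sum>d\<in>UNIV. emb (\<Sum>b\<in>UNIV. \<Sum>a\<in>UNIV. R c b d a * R a i b j) * T d c)"
    unfolding emb_sum sum_distrib_right by (intro sum.cong refl sum.swap)
  also have "\<dots> = (\<Sum>c\<in>UNIV. \<Sum>d\<in>UNIV. emb (q - inverse q) * (emb (R c i d j) * T d c)
                     + (if d = i \<and> c = j then T d c else 0))"
    using assms by (simp add: hecke_components emb_add emb_mult distrib_right mult.assoc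
        if_distrib[of emb] if_distrib[of "\<lambda>e. e * t" for t] cong: if_cong)
  also have "\<dots> = emb (q - inverse q) * braid_op emb R T i j + T i j"
  proof -
    have "(\<Sum>d\<in>UNIV. if d = i \<and> c = j then T d c else 0) = (if c = j then T i c else 0)" for c
      by auto
    then show ?thesis by (simp add: sum.distrib sum_distrib_left braid_op_def)
  qed
  finally show ?thesis .
qed

lemma omega_rels_iff_braid_op:
  "omega_rels emb q R x dx \<longleftrightarrow>
     (\<forall>i j. x i * x j = emb (inverse q) * braid_op emb R (\<lambda>u v. x u * x v) i j) \<and>
     (\<forall>i j. dx i * x j = emb q * braid_op emb R (\<lambda>u v. x u * dx v) i j) \<and>
     (\<forall>i j. dx i * dx j = - (emb q * braid_op emb R (\<lambda>u v. dx u * dx v) i j))"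
  unfolding omega_rels_def braid_op_def
  by (simp add: sum_distrib_left emb_mult mult.assoc emb_uminus sum_negf)

end

locale omega_generators = scalar_embedding emb for emb :: "'k::field \<Rightarrow> 'S::ring_1" +
  fixes q :: 'k and R :: "'n::finite \<Rightarrow> 'n \<Rightarrow> 'n \<Rightarrow> 'n \<Rightarrow> 'k" and x dx :: "'n \<Rightarrow> 'S"
  assumes q_nonzero: "q \<noteq> 0"
    and hecke: "hecke q R"
    and omega_rels: "omega_rels emb q R x dx"
begin

lemma emb_inverse_cancel: "emb (inverse q) * (emb q * t) = t" "emb q * (emb (inverse q) * t) = t"
  using q_nonzero by (simp_all add: emb_mult_emb)

lemma braid_op_x_x: "braid_op emb R (\<lambda>u v. x u * x v) i j = emb q * (x i * x j)"
proof -
  have "x i * x j = emb (inverse q) * braid_op emb R (\<lambda>u v. x u * x v) i j"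
    using omega_rels unfolding omega_rels_iff_braid_op by blast
  then show ?thesis by (metis emb_inverse_cancel(2))
qed

lemma braid_op_x_dx: "braid_op emb R (\<lambda>u v. x u * dx v) i j = emb (inverse q) * (dx i * x j)"
proof -
  have "dx i * x j = emb q * braid_op emb R (\<lambda>u v. x u * dx v) i j"
    using omega_rels unfolding omega_rels_iff_braid_op by blast
  then show ?thesis by (metis emb_inverse_cancel(1))
qed

lemma braid_op_dx_dx: "braid_op emb R (\<lambda>u v. dx u * dx v) i j = - (emb (inverse q) * (dx i * dx j))"
proof -
  have "dx i * dx j = - (emb q * braid_op emb R (\<lambda>u v. dx u * dx v) i j)"
    using omega_rels unfolding omega_rels_iff_braid_op by blast
  then show ?thesis by (metis emb_inverse_cancel(1) minus_minus mult_minus_right)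
qed

lemma braid_op_dx_x:
  "braid_op emb R (\<lambda>u v. dx u * x v) i j = emb (q - inverse q) * (dx i * x j) + emb q * (x i * dx j)"
proof -
  have "(\<lambda>u v. dx u * x v) = (\<lambda>u v. emb q * braid_op emb R (\<lambda>u v. x u * dx v) u v)"
    using omega_rels unfolding omega_rels_iff_braid_op by blast
  then have "braid_op emb R (\<lambda>u v. dx u * x v) i j
      = emb q * braid_op emb R (braid_op emb R (\<lambda>u v. x u * dx v)) i j"
    by (simp add: braid_op_mult_left)
  also have "\<dots> = emb q * (emb (q - inverse q) * (emb (inverse q) * (dx i * x j)) + x i * dx j)"
    by (simp only: braid_op_quadratic[OF hecke q_nonzero] braid_op_x_dx)
  also have "\<dots> = emb (q * (q - inverse q) * inverse q) * (dx i * x j) + emb q * (x i * dx j)"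
    by (simp add: distrib_left emb_mult_emb mult.assoc)
  also have "q * (q - inverse q) * inverse q = q - inverse q"
    using q_nonzero by (simp add: field_simps)
  finally show ?thesis .
qed

lemma braid_op_quadratic_form:
  "braid_op emb R (\<lambda>u v. A * (x u * x v) + B * (x u * dx v) + C * (dx u * x v) + D * (dx u * dx v)) i j
   = emb q * (A * (x i * x j)) + emb q * (C * (x i * dx j))
     + emb (inverse q) * (B * (dx i * x j)) + emb (q - inverse q) * (C * (dx i * x j))
     - emb (inverse q) * (D * (dx i * dx j))"
  by (simp add: braid_op_add braid_op_mult_left braid_op_x_x braid_op_x_dx braid_op_dx_x braid_op_dx_dx
      mult_emb_left_commute[of A] mult_emb_left_commute[of B] mult_emb_left_commute[of C]
      mult_emb_left_commute[of D] distrib_left)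

end

locale gl11_coaction = omega_generators emb q R x dx
  for emb :: "'k::field \<Rightarrow> 'S::ring_1" and q R and x dx :: "'n::finite \<Rightarrow> 'S" +
  fixes \<alpha> \<beta> \<gamma> \<delta> :: 'S
  assumes gl11_rels: "gl11_rels emb q \<alpha> \<beta> \<gamma> \<delta>"
    and graded_cross_rels: "graded_cross_rels \<alpha> \<beta> \<gamma> \<delta> x dx"
begin

lemma graded_commute:
  "x u * (\<alpha> * t) = \<alpha> * (x u * t)" "dx u * (\<alpha> * t) = \<alpha> * (dx u * t)"
  "x u * (\<delta> * t) = \<delta> * (x u * t)" "dx u * (\<delta> * t) = \<delta> * (dx u * t)"
  "x u * (\<beta> * t) = \<beta> * (x u * t)" "x u * (\<gamma> * t) = \<gamma> * (x u * t)"
  "dx u * (\<beta> * t) = - (\<beta> * (dx u * t))" "dx u * (\<gamma> * t) = - (\<gamma> * (dx u * t))"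
  using graded_cross_rels unfolding graded_cross_rels_def by (simp_all flip: mult.assoc)

lemma gl11_reorder:
  "\<beta> * (\<alpha> * t) = \<alpha> * (\<beta> * t)"
  "\<gamma> * (\<alpha> * t) = emb (q\<^sup>2) * (\<alpha> * (\<gamma> * t))"
  "\<delta> * (\<beta> * t) = \<beta> * (\<delta> * t)"
  "\<delta> * (\<gamma> * t) = emb (inverse (q\<^sup>2)) * (\<gamma> * (\<delta> * t))"
  "\<gamma> * (\<beta> * t) = - (emb (q\<^sup>2) * (\<beta> * (\<gamma> * t)))"
  "\<delta> * (\<alpha> * t) = \<alpha> * (\<delta> * t) + emb (1 - q\<^sup>2) * (\<beta> * (\<gamma> * t))"
  "\<beta> * (\<beta> * t) = 0" "\<gamma> * (\<gamma> * t) = 0"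
proof -
  have "\<delta> * \<alpha> = \<alpha> * \<delta> + emb (1 - q\<^sup>2) * (\<beta> * \<gamma>)"
    using gl11_rels unfolding gl11_rels_def by (simp add: diff_eq_eq add.commute)
  then show "\<delta> * (\<alpha> * t) = \<alpha> * (\<delta> * t) + emb (1 - q\<^sup>2) * (\<beta> * (\<gamma> * t))"
    by (simp add: distrib_right flip: mult.assoc)
qed (use gl11_rels in \<open>simp_all add: gl11_rels_def flip: mult.assoc\<close>)

lemma coaction_x_x:
  "(\<alpha> * x i + \<beta> * dx i) * (\<alpha> * x j + \<beta> * dx j)
   = emb (inverse q) * braid_op emb R (\<lambda>u v. (\<alpha> * x u + \<beta> * dx u) * (\<alpha> * x v + \<beta> * dx v)) i j"
proof -
  have expand: "(\<alpha> * x u + \<beta> * dx u) * (\<alpha> * x v + \<beta> * dx v)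
      = (\<alpha> * \<alpha>) * (x u * x v) + (\<alpha> * \<beta>) * (x u * dx v) + (\<beta> * \<alpha>) * (dx u * x v)
        + (- (\<beta> * \<beta>)) * (dx u * dx v)" for u v
    by (simp add: algebra_simps graded_commute)
  show ?thesis
    by (simp only: expand braid_op_quadratic_form)
      (simp add: algebra_simps gl11_reorder emb_mult_emb emb_diff q_nonzero)
qed

lemma coaction_dx_x:
  "(\<gamma> * x i + \<delta> * dx i) * (\<alpha> * x j + \<beta> * dx j)
   = emb q * braid_op emb R (\<lambda>u v. (\<alpha> * x u + \<beta> * dx u) * (\<gamma> * x v + \<delta> * dx v)) i j"
proof -
  have expand_lhs: "(\<gamma> * x i + \<delta> * dx i) * (\<alpha> * x j + \<beta> * dx j)
      = (\<gamma> * \<alpha>) * (x i * x j) + (\<gamma> * \<beta>) * (x i * dx j) + (\<delta> * \<alpha>) * (dx i * x j)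
        + (- (\<delta> * \<beta>)) * (dx i * dx j)"
    by (simp add: algebra_simps graded_commute)
  have expand_rhs: "(\<alpha> * x u + \<beta> * dx u) * (\<gamma> * x v + \<delta> * dx v)
      = (\<alpha> * \<gamma>) * (x u * x v) + (\<alpha> * \<delta>) * (x u * dx v) + (- (\<beta> * \<gamma>)) * (dx u * x v)
        + (\<beta> * \<delta>) * (dx u * dx v)" for u v
    by (simp add: algebra_simps graded_commute)
  show ?thesis
    by (simp only: expand_lhs expand_rhs braid_op_quadratic_form)
      (simp add: algebra_simps gl11_reorder emb_mult_emb emb_diff emb_uminus power2_eq_square q_nonzero)
qed

lemma coaction_dx_dx:
  "(\<gamma> * x i + \<delta> * dx i) * (\<gamma> * x j + \<delta> * dx j)
   = - (emb q * braid_op emb R (\<lambda>u v. (\<gamma> * x u + \<delta> * dx u) * (\<gamma> * x v + \<delta> * dx v)) i j)"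
proof -
  have expand: "(\<gamma> * x u + \<delta> * dx u) * (\<gamma> * x v + \<delta> * dx v)
      = (\<gamma> * \<gamma>) * (x u * x v) + (\<gamma> * \<delta>) * (x u * dx v) + (- (\<delta> * \<gamma>)) * (dx u * x v)
        + (\<delta> * \<delta>) * (dx u * dx v)" for u v
    by (simp add: algebra_simps graded_commute)
  show ?thesis
    by (simp only: expand braid_op_quadratic_form)
      (simp add: algebra_simps gl11_reorder emb_mult_emb emb_mult_add emb_diff emb_uminus power2_eq_square
          field_simps q_nonzero)
qed

lemma omega_rels_coaction:
  "omega_rels emb q R (\<lambda>i. \<alpha> * x i + \<beta> * dx i) (\<lambda>i. \<gamma> * x i + \<delta> * dx i)"
  unfolding omega_rels_iff_braid_op using coaction_x_x coaction_dx_x coaction_dx_dx by blast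

end

theorem mainTheorem10:
  fixes q :: "'k::field"
    and R :: "'n::finite \<Rightarrow> 'n \<Rightarrow> 'n \<Rightarrow> 'n \<Rightarrow> 'k"
    and emb :: "'k \<Rightarrow> 'S::ring_1"
    and \<alpha> \<beta> \<gamma> \<delta> :: 'S
    and x dx :: "'n \<Rightarrow> 'S"
  assumes "q \<noteq> 0"
    and "QYBE R"
    and "hecke q R"
    and "central_scalars emb"
    and "omega_rels emb q R x dx"
    and "gl11_rels emb q \<alpha> \<beta> \<gamma> \<delta>"
    and "graded_cross_rels \<alpha> \<beta> \<gamma> \<delta> x dx"
  shows "omega_rels emb q R (\<lambda>i. \<alpha> * x i + \<beta> * dx i) (\<lambda>i. \<gamma> * x i + \<delta> * dx i)"
proof -
  interpret gl11_coaction emb q R x dx \<alpha> \<beta> \<gamma> \<delta>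
    by unfold_locales (use assms in auto)
  show ?thesis by (rule omega_rels_coaction)
qed

end
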